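(* Let $X$ be a finite set and $F_X:\mathbf{pow}(X)\to\mathbb{R}$ a filtration. Then for every $\sigma\in\mathbf{pow}(X)$, $$F_X(\sigma)=\min\{T_X(\sigma)\mid T_X \text{ is a tree filtration over }X\text{ with }T_X(\tau)\geq F_X(\tau)\text{ for all }\tau\in\mathbf{pow}(X)\},$$ and the minimum may be taken over a finite set of such tree filtrations.
   Context: $\mathbf{pow}(X)$ is the set of nonempty subsets of $X$. A filtration over $X$ is an order-preserving map $F_X:(\mathbf{pow}(X),\subset)\to(\mathbb{R},\leq)$. A symmetric ultranetwork over $X$ is a map $U_X:X\times X\to\mathbb{R}$ with $U_X(x,x')=U_X(x',x)$ and $U_X(x,x'')\leq\max\{U_X(x,x'),U_X(x',x'')\}$ for all $x,x',x''\in X$. A tree filtration is a filtration of the form $T_X(\sigma)=\max_{x,x'\in\sigma}U_X(x,x')$ for some symmetric ultranetwork $U_X$ (its Vietoris–Rips filtration). *)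

theory Defs
  imports Complex_Main
begin

definition pow :: "'a set \<Rightarrow> 'a set set" where
  "pow X = {\<sigma>. \<sigma> \<subseteq> X \<and> \<sigma> \<noteq> {}}"

definition filtration :: "'a set \<Rightarrow> ('a set \<Rightarrow> real) \<Rightarrow> bool" where
  "filtration X F \<longleftrightarrow> (\<forall>\<sigma>\<in>pow X. \<forall>\<tau>\<in>pow X. \<sigma> \<subseteq> \<tau> \<longrightarrow> F \<sigma> \<le> F \<tau>)"

definition sym_ultranetwork :: "'a set \<Rightarrow> ('a \<Rightarrow> 'a \<Rightarrow> real) \<Rightarrow> bool" where
  "sym_ultranetwork X U \<longleftrightarrow>
     (\<forall>x\<in>X. \<forall>x'\<in>X. U x x' = U x' x) \<and>
     (\<forall>x\<in>X. \<forall>x'\<in>X. \<forall>x''\<in>X. U x x'' \<le> max (U x x') (U x' x''))"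

text \<open>A tree filtration over X: the Vietoris--Rips filtration of some symmetric ultranetwork.\<close>
definition tree_filtration :: "'a set \<Rightarrow> ('a set \<Rightarrow> real) \<Rightarrow> bool" where
  "tree_filtration X T \<longleftrightarrow>
     (\<exists>U. sym_ultranetwork X U \<and>
          (\<forall>\<sigma>\<in>pow X. T \<sigma> = Max {U x x' | x x'. x \<in> \<sigma> \<and> x' \<in> \<sigma>}))"

end

theory Submission
  imports Defs
begin

text \<open>For \<open>\<sigma>\<close> in \<open>pow X\<close>, the ultranetwork equal to \<open>F \<sigma>\<close> on \<open>\<sigma> \<times> \<sigma>\<close> and to \<open>F X\<close>
  elsewhere has a Vietoris--Rips filtration that dominates \<open>F\<close> (by monotonicity of \<open>F\<close>)
  and takes the value \<open>F \<sigma>\<close> at \<open>\<sigma>\<close>.\<close>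

definition two_level_filtration :: "'a set \<Rightarrow> ('a set \<Rightarrow> real) \<Rightarrow> 'a set \<Rightarrow> 'a set \<Rightarrow> real" where
  "two_level_filtration X F \<rho> \<tau> = (if \<tau> \<subseteq> \<rho> then F \<rho> else F X)"

lemma filtration_le_top:
  assumes "filtration X F" and "\<sigma> \<in> pow X"
  shows "F \<sigma> \<le> F X"
  using assms by (auto simp: filtration_def pow_def)

lemma sym_ultranetwork_two_level:
  assumes "a \<le> b"
  shows "sym_ultranetwork X (\<lambda>x x'. if x \<in> \<rho> \<and> x' \<in> \<rho> then a else b)"
  using assms unfolding sym_ultranetwork_def by auto

lemma Max_two_level:
  assumes "a \<le> b" and "\<sigma> \<noteq> {}"
  shows "Max {(if x \<in> \<rho> \<and> x' \<in> \<rho> then a else b) | x x'. x \<in> \<sigma> \<and> x' \<in> \<sigma>}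
           = (if \<sigma> \<subseteq> \<rho> then a else b)"
    (is "Max ?A = _")
proof -
  have fin: "finite ?A"
    by (rule finite_subset[of _ "{a, b}"]) auto
  show ?thesis
  proof (cases "\<sigma> \<subseteq> \<rho>")
    case True
    then have "?A = {a}" using assms(2) by auto
    then show ?thesis using True by simp
  next
    case False
    then obtain z where "z \<in> \<sigma>" "z \<notin> \<rho>" by auto
    then have "b \<in> ?A" by force
    moreover have "c \<le> b" if "c \<in> ?A" for c using that assms(1) by auto
    ultimately have "Max ?A = b" using fin by (intro Max_eqI)
    then show ?thesis using False by simp
  qed
qed

lemma tree_filtration_two_level:
  assumes "a \<le> b"
  shows "tree_filtration X (\<lambda>\<tau>. if \<tau> \<subseteq> \<rho> then a else b)"
  unfolding tree_filtration_def
proof (intro exI conjI)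
  show "sym_ultranetwork X (\<lambda>x x'. if x \<in> \<rho> \<and> x' \<in> \<rho> then a else b)"
    using assms by (rule sym_ultranetwork_two_level)
  show "\<forall>\<sigma>\<in>pow X. (if \<sigma> \<subseteq> \<rho> then a else b)
          = Max {(if x \<in> \<rho> \<and> x' \<in> \<rho> then a else b) | x x'. x \<in> \<sigma> \<and> x' \<in> \<sigma>}"
  proof
    fix \<sigma> assume "\<sigma> \<in> pow X"
    then have "\<sigma> \<noteq> {}" by (simp add: pow_def)
    then show "(if \<sigma> \<subseteq> \<rho> then a else b)
          = Max {(if x \<in> \<rho> \<and> x' \<in> \<rho> then a else b) | x x'. x \<in> \<sigma> \<and> x' \<in> \<sigma>}"
      by (rule Max_two_level[OF assms, symmetric])
  qed
qed

lemma tree_filtration_two_level_filtration: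
  assumes "filtration X F" and "\<rho> \<in> insert X (pow X)"
  shows "tree_filtration X (two_level_filtration X F \<rho>)"
proof -
  have "F \<rho> \<le> F X" using assms filtration_le_top by auto
  then show ?thesis
    unfolding two_level_filtration_def by (rule tree_filtration_two_level)
qed

lemma two_level_filtration_ge:
  assumes "filtration X F" and "\<rho> \<subseteq> X" and "\<tau> \<in> pow X"
  shows "F \<tau> \<le> two_level_filtration X F \<rho> \<tau>"
  using assms by (auto simp: two_level_filtration_def filtration_def pow_def)

lemma two_level_filtration_self: "two_level_filtration X F \<sigma> \<sigma> = F \<sigma>"
  by (simp add: two_level_filtration_def)

lemma two_level_filtrations_dominate:
  assumes "filtration X F" and "T \<in> two_level_filtration X F ` insert X (pow X)"
  shows "tree_filtration X T \<and> (\<forall>\<tau>\<in>pow X. F \<tau> \<le> T \<tau>)"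
proof -
  obtain \<rho> where \<rho>: "\<rho> \<in> insert X (pow X)" and T: "T = two_level_filtration X F \<rho>"
    using assms(2) by blast
  have "\<rho> \<subseteq> X" using \<rho> by (auto simp: pow_def)
  then show ?thesis
    using T tree_filtration_two_level_filtration[OF assms(1) \<rho>]
      two_level_filtration_ge[OF assms(1)] by simp
qed

lemma Min_two_level_filtrations:
  assumes "finite X" and "filtration X F" and "\<sigma> \<in> pow X"
  shows "F \<sigma> = Min ((\<lambda>T. T \<sigma>) ` two_level_filtration X F ` insert X (pow X))"
proof (rule Min_eqI[symmetric])
  show "finite ((\<lambda>T. T \<sigma>) ` two_level_filtration X F ` insert X (pow X))"
    using assms(1) by (simp add: pow_def)
  show "F \<sigma> \<le> y" if "y \<in> (\<lambda>T. T \<sigma>) ` two_level_filtration X F ` insert X (pow X)" for y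
    using that two_level_filtrations_dominate[OF assms(2)] assms(3) by auto
  show "F \<sigma> \<in> (\<lambda>T. T \<sigma>) ` two_level_filtration X F ` insert X (pow X)"
    using assms(3) two_level_filtration_self by (metis image_eqI insertCI)
qed

theorem mainTheorem5:
  fixes X :: "'a set" and F :: "'a set \<Rightarrow> real"
  assumes "finite X"
    and "filtration X F"
  shows "(\<forall>\<sigma>\<in>pow X.
            F \<sigma> \<in> {T \<sigma> | T. tree_filtration X T \<and> (\<forall>\<tau>\<in>pow X. F \<tau> \<le> T \<tau>)} \<and>
            (\<forall>T. tree_filtration X T \<and> (\<forall>\<tau>\<in>pow X. F \<tau> \<le> T \<tau>) \<longrightarrow> F \<sigma> \<le> T \<sigma>))
         \<and> (\<exists>S. finite S \<and> S \<noteq> {} \<and>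
               (\<forall>T\<in>S. tree_filtration X T \<and> (\<forall>\<tau>\<in>pow X. F \<tau> \<le> T \<tau>)) \<and>
               (\<forall>\<sigma>\<in>pow X. F \<sigma> = Min ((\<lambda>T. T \<sigma>) ` S)))"
proof -
  \<comment> \<open>Adding \<open>X\<close> keeps the family nonempty when \<open>X = {}\<close>, where \<open>pow X\<close> is empty.\<close>
  let ?S = "two_level_filtration X F ` insert X (pow X)"
  note dominating = two_level_filtrations_dominate[OF assms(2)]
  have "\<forall>\<sigma>\<in>pow X.
          F \<sigma> \<in> {T \<sigma> | T. tree_filtration X T \<and> (\<forall>\<tau>\<in>pow X. F \<tau> \<le> T \<tau>)} \<and>
          (\<forall>T. tree_filtration X T \<and> (\<forall>\<tau>\<in>pow X. F \<tau> \<le> T \<tau>) \<longrightarrow> F \<sigma> \<le> T \<sigma>)"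
  proof
    fix \<sigma> assume \<sigma>: "\<sigma> \<in> pow X"
    let ?T = "two_level_filtration X F \<sigma>"
    have "tree_filtration X ?T \<and> (\<forall>\<tau>\<in>pow X. F \<tau> \<le> ?T \<tau>)"
      using \<sigma> by (intro dominating) blast
    then have "F \<sigma> \<in> {T \<sigma> | T. tree_filtration X T \<and> (\<forall>\<tau>\<in>pow X. F \<tau> \<le> T \<tau>)}"
      unfolding mem_Collect_eq by (intro exI[of _ ?T]) (simp add: two_level_filtration_self)
    then show "F \<sigma> \<in> {T \<sigma> | T. tree_filtration X T \<and> (\<forall>\<tau>\<in>pow X. F \<tau> \<le> T \<tau>)} \<and>
          (\<forall>T. tree_filtration X T \<and> (\<forall>\<tau>\<in>pow X. F \<tau> \<le> T \<tau>) \<longrightarrow> F \<sigma> \<le> T \<sigma>)"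
      using \<sigma> by blast
  qed
  moreover have "\<exists>S. finite S \<and> S \<noteq> {} \<and>
      (\<forall>T\<in>S. tree_filtration X T \<and> (\<forall>\<tau>\<in>pow X. F \<tau> \<le> T \<tau>)) \<and>
      (\<forall>\<sigma>\<in>pow X. F \<sigma> = Min ((\<lambda>T. T \<sigma>) ` S))"
    using assms dominating Min_two_level_filtrations
    by (intro exI[of _ ?S] conjI ballI) (simp_all add: pow_def)
  ultimately show ?thesis ..
qed

end
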